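(* Let $D$ be a quadratic discriminant and suppose that every rational prime $p$ with $p\le\sqrt{|D|/3}$ (if $D<0$) or $p\le\sqrt{D/5}$ (if $D>0$) that is irreducible in $\mathcal{O}_D$ is also prime in $\mathcal{O}_D$. Then every rational prime number factors as a product of prime elements of $\mathcal{O}_D$.
   Context: A quadratic discriminant is a nonsquare integer $D$ with $D\equiv 0$ or $1\pmod 4$. Write $D=4d+\sigma$ with $\sigma\in\{0,1\}$, let $\tau=\frac{\sigma+\sqrt{D}}{2}$, and $\mathcal{O}_D=\mathbb{Z}[\tau]=\mathbb{Z}+\mathbb{Z}\tau$. In a domain, an element is irreducible if it is nonzero, not a unit, and any factorization of it into two elements has a unit factor; it is prime if it is nonzero, not a unit, and whenever it divides a product it divides one of the factors. *)

theory Defs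
  imports Complex_Main "HOL-Computational_Algebra.Primes"
begin

definition quad_disc :: "int \<Rightarrow> bool" where
  "quad_disc D \<longleftrightarrow> (\<nexists>k. D = k^2) \<and> (D mod 4 = 0 \<or> D mod 4 = 1)"

definition qsigma :: "int \<Rightarrow> int" where
  "qsigma D = D mod 4"

definition qtau :: "int \<Rightarrow> complex" where
  "qtau D = (of_int (qsigma D) + csqrt (of_int D)) / 2"

definition OD :: "int \<Rightarrow> complex set" where
  "OD D = {of_int a + of_int b * qtau D | a b. True}"

definition dvd_OD :: "int \<Rightarrow> complex \<Rightarrow> complex \<Rightarrow> bool" where
  "dvd_OD D x y \<longleftrightarrow> (\<exists>z\<in>OD D. y = x * z)"

definition unit_OD :: "int \<Rightarrow> complex \<Rightarrow> bool" where
  "unit_OD D u \<longleftrightarrow> u \<in> OD D \<and> dvd_OD D u 1"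

definition irreducible_OD :: "int \<Rightarrow> complex \<Rightarrow> bool" where
  "irreducible_OD D x \<longleftrightarrow> x \<in> OD D \<and> x \<noteq> 0 \<and> \<not> unit_OD D x \<and>
     (\<forall>a\<in>OD D. \<forall>b\<in>OD D. x = a * b \<longrightarrow> unit_OD D a \<or> unit_OD D b)"

definition prime_OD :: "int \<Rightarrow> complex \<Rightarrow> bool" where
  "prime_OD D x \<longleftrightarrow> x \<in> OD D \<and> x \<noteq> 0 \<and> \<not> unit_OD D x \<and>
     (\<forall>a\<in>OD D. \<forall>b\<in>OD D. dvd_OD D x (a * b) \<longrightarrow> dvd_OD D x a \<or> dvd_OD D x b)"

end

theory Submission
  imports Defs "HOL-Library.Discrete_Functions" "HOL-Computational_Algebra.Nth_Powers"
begin

(*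
  Strong induction on the rational prime p.  If p is not irreducible, p = \<alpha>\<beta> with
  N(\<alpha>) N(\<beta>) = p\<^sup>2 and neither factor a unit, so both have norm \<pm>p, and elements of
  prime norm are prime.  If p is irreducible and small, it is prime by hypothesis.

  If p is irreducible and large but not prime, then p divides some N(r + \<tau>), for otherwise
  the norm form has no nontrivial zero mod p and p is prime.  Replacing r by r + jp
  makes |(2r + \<sigma>)\<^sup>2 - D| < 4p\<^sup>2, which is where the bound on p enters, so
  N(a + \<tau>) = pm with 0 < |m| < p.  By induction the primes dividing m factor into primes
  of O_D; cancelling them from pm = (a + \<tau>)(a + \<sigma> - \<tau>) writes p = \<gamma>\<delta> with \<gamma> | a + \<tau>
  and \<delta> | a + \<sigma> - \<tau>.  One of \<gamma>, \<delta> is a unit, so p divides an element whose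
  \<tau>-coordinate is \<pm>1, which is absurd.
*)

lemma exists_residue_in_interval:
  fixes u c m :: int
  assumes "m > 0"
  shows "\<exists>j. c \<le> u + j * m \<and> u + j * m < c + m"
proof -
  have "u + (- ((u - c) div m)) * m = c + (u - c) mod m"
    using div_mult_mod_eq[of "u - c" m] by (simp add: algebra_simps)
  moreover have "0 \<le> (u - c) mod m" "(u - c) mod m < m"
    using assms by simp_all
  ultimately show ?thesis by (intro exI[of _ "- ((u - c) div m)"]) linarith
qed

lemma exists_residue_near_square:
  fixes p D u :: int
  assumes p: "p > 0" and bound: "(D < 0 \<and> -D < 3 * p^2) \<or> (D > 0 \<and> D < 5 * p^2)"
  shows "\<exists>j. \<bar>(u + j * (2*p))^2 - D\<bar> < 4 * p^2"
proof (cases "D < 4 * p^2")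
  case True
  obtain j where j: "-p \<le> u + j * (2*p)" "u + j * (2*p) < -p + 2*p"
    using exists_residue_in_interval[where u = u and c = "-p" and m = "2*p"] p by auto
  define v where "v = u + j * (2*p)"
  have "\<bar>v\<bar> \<le> p" using j unfolding v_def abs_le_iff by linarith
  then have "\<bar>v\<bar>^2 \<le> p^2" by (rule power_mono) simp
  then have "v^2 \<le> p^2" by simp
  moreover have "v^2 \<ge> 0" by simp
  ultimately have "\<bar>v^2 - D\<bar> < 4 * p^2"
    using True bound p unfolding abs_less_iff by linarith
  then show ?thesis unfolding v_def by blast
next
  case False
  define X where "X = D - 4 * p^2"
  define w where "w = int (floor_sqrt (nat X))"
  have X: "X \<ge> 0" using False X_def by simp
  have w: "w \<ge> 0" "w^2 \<le> X" "X < (w + 1)^2"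
  proof -
    have "int ((floor_sqrt (nat X))^2) \<le> int (nat X)"
      by (simp only: of_nat_le_iff floor_sqrt_power2_le)
    moreover have "int (nat X) < int ((Suc (floor_sqrt (nat X)))^2)"
      by (simp only: of_nat_less_iff Suc_floor_sqrt_power2_gt)
    ultimately show "w \<ge> 0" "w^2 \<le> X" "X < (w + 1)^2"
      using X unfolding w_def by (simp_all add: add.commute)
  qed
  have "w^2 < p^2" using w(2) bound X_def by linarith
  then have wp: "w < p" using p power_less_imp_less_base[of w 2 p] by simp
  obtain j where j: "w + 1 \<le> u + j * (2*p)" "u + j * (2*p) < w + 1 + 2*p"
    using exists_residue_in_interval[where u = u and c = "w + 1" and m = "2*p"] p by auto
  define v where "v = u + j * (2*p)"
  have "(w + 1)^2 \<le> v^2" using j(1) w(1) unfolding v_def by (intro power_mono) simp_all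
  then have lower: "v^2 - D > - 4 * p^2" using w(3) X_def by linarith
  have "v^2 \<le> (w + 2*p)^2" using j w(1) unfolding v_def by (intro power_mono) simp_all
  also have "\<dots> = w^2 + 4*p*w + 4*p^2" by (simp add: algebra_simps power2_eq_square)
  also have "4*p*w < 4*p*p" using wp p by simp
  then have "w^2 + 4*p*w + 4*p^2 < X + 4*p*p + 4*p^2" using w(2) by linarith
  finally have "v^2 < D + 4*p^2" unfolding X_def by (simp add: power2_eq_square)
  then have "\<bar>v^2 - D\<bar> < 4 * p^2" using lower unfolding abs_less_iff by linarith
  then show ?thesis unfolding v_def by blast
qed

lemma abs_eq_prime_if_mult_eq_prime_square:
  fixes x y P :: int
  assumes "prime P" "x * y = P^2" "\<bar>x\<bar> \<noteq> 1" "\<bar>y\<bar> \<noteq> 1"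
  shows "\<bar>x\<bar> = P"
proof -
  have "x dvd P^2" unfolding assms(2)[symmetric] by simp
  then obtain k where k: "k \<le> 2" "normalize x = P^k"
    by (rule divides_primepow[OF assms(1)])
  have P: "P > 1" using assms(1) prime_gt_1_int by blast
  have xy: "\<bar>x\<bar> * \<bar>y\<bar> = P^2" unfolding abs_mult[symmetric] assms(2) by simp
  consider "k = 0" | "k = 1" | "k = 2" using k(1) by linarith
  then show ?thesis
  proof cases
    case 1
    then show ?thesis using k(2) assms(3) by simp
  next
    case 2
    then show ?thesis using k(2) by simp
  next
    case 3
    then have "\<bar>x\<bar> * \<bar>y\<bar> = \<bar>x\<bar> * 1" using k(2) xy by simp
    moreover have "\<bar>x\<bar> \<noteq> 0" using P 3 k(2) by simp
    ultimately have "\<bar>y\<bar> = 1" by simp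
    then show ?thesis using assms(4) by contradiction
  qed
qed

lemma prime_bound_if_not_small:
  fixes D :: int and p :: nat
  assumes "D \<noteq> 0"
    and "\<not> ((D < 0 \<and> real p \<le> sqrt (\<bar>real_of_int D\<bar> / 3)) \<or>
            (D > 0 \<and> real p \<le> sqrt (real_of_int D / 5)))"
  shows "(D < 0 \<and> -D < 3 * int p^2) \<or> (D > 0 \<and> D < 5 * int p^2)"
proof (cases "D < 0")
  case True
  then have "\<not> (real p)^2 \<le> \<bar>real_of_int D\<bar> / 3" using assms(2) real_le_rsqrt by blast
  then have "real_of_int (-D) < real_of_int (3 * int p^2)" using True by simp
  then have "-D < 3 * int p^2" by (simp only: of_int_less_iff)
  then show ?thesis using True by simp
next
  case False
  then have "D > 0" using assms(1) by simp
  then have "\<not> (real p)^2 \<le> real_of_int D / 5" using assms(2) real_le_rsqrt by blast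
  then have "real_of_int D < real_of_int (5 * int p^2)" by simp
  then have "D < 5 * int p^2" by (simp only: of_int_less_iff)
  then show ?thesis using \<open>D > 0\<close> by simp
qed

definition qd :: "int \<Rightarrow> int" where
  "qd D = (D - qsigma D) div 4"

definition qelem :: "int \<Rightarrow> int \<Rightarrow> int \<Rightarrow> complex" where
  "qelem D a b = of_int a + of_int b * qtau D"

text \<open>\<open>qnorm D a b\<close> is the norm of \<open>qelem D a b = a + b\<tau>\<close>, see \<open>qelem_mult_conj\<close>.\<close>

definition qnorm :: "int \<Rightarrow> int \<Rightarrow> int \<Rightarrow> int" where
  "qnorm D a b = a^2 + qsigma D * a * b - qd D * b^2"

lemma qnorm_shift:
  "qnorm D (r + j * p) 1 = qnorm D r 1 + p * (j * (2 * r + j * p + qsigma D))"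
  unfolding qnorm_def by (simp add: algebra_simps power2_eq_square)

lemma four_times_norm_form:
  fixes s a b k :: int
  assumes "s = 0 \<or> s = 1"
  shows "4 * (a^2 + s*a*b - k*b^2) = (2*a + s*b)^2 - (4*k + s) * b^2"
  using assms by (elim disjE) (simp_all add: algebra_simps power2_eq_square)

definition has_prime_factorization_OD :: "int \<Rightarrow> complex \<Rightarrow> bool" where
  "has_prime_factorization_OD D z \<longleftrightarrow> (\<exists>xs. (\<forall>x\<in>set xs. prime_OD D x) \<and> z = prod_list xs)"

lemma has_prime_factorization_OD_1: "has_prime_factorization_OD D 1"
  unfolding has_prime_factorization_OD_def by (intro exI[of _ "[]"]) simp

lemma has_prime_factorization_OD_prime:
  "prime_OD D x \<Longrightarrow> has_prime_factorization_OD D x"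
  unfolding has_prime_factorization_OD_def by (intro exI[of _ "[x]"]) simp

lemma has_prime_factorization_OD_mult:
  assumes "has_prime_factorization_OD D x" "has_prime_factorization_OD D y"
  shows "has_prime_factorization_OD D (x * y)"
proof -
  obtain xs ys where "\<forall>z\<in>set xs. prime_OD D z" "x = prod_list xs"
      "\<forall>z\<in>set ys. prime_OD D z" "y = prod_list ys"
    using assms unfolding has_prime_factorization_OD_def by blast
  then show ?thesis unfolding has_prime_factorization_OD_def by (intro exI[of _ "xs @ ys"]) auto
qed

lemma has_prime_factorization_OD_of_nat:
  assumes "n > 0" "\<And>q. prime q \<Longrightarrow> q dvd n \<Longrightarrow> has_prime_factorization_OD D (of_nat q)"
  shows "has_prime_factorization_OD D (of_nat n)"
  using assms
proof (induction n rule: prime_divisors_induct)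
  case (factor q n)
  then show ?case using has_prime_factorization_OD_mult[of D "of_nat q" "of_nat n"] by simp
qed (simp_all add: has_prime_factorization_OD_1)

lemma mem_OD_iff: "z \<in> OD D \<longleftrightarrow> (\<exists>a b. z = qelem D a b)"
  unfolding OD_def qelem_def by auto

lemma qelem_in_OD [simp]: "qelem D a b \<in> OD D"
  using mem_OD_iff by blast

lemma of_int_eq_qelem: "(of_int n :: complex) = qelem D n 0"
  by (simp add: qelem_def)

lemma of_int_mult_qelem: "of_int k * qelem D a b = qelem D (k*a) (k*b)"
  by (simp add: qelem_def algebra_simps)

lemma of_int_in_OD [simp]: "(of_int n :: complex) \<in> OD D"
  unfolding of_int_eq_qelem[where D = D and n = n] by simp

lemma one_in_OD [simp]: "(1 :: complex) \<in> OD D"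
  using of_int_in_OD[where n = 1] by simp

lemma dvd_OD_qelem_iff: "dvd_OD D (qelem D a b) z \<longleftrightarrow> (\<exists>f g. z = qelem D a b * qelem D f g)"
  unfolding dvd_OD_def by (metis mem_OD_iff qelem_in_OD)

lemma dvd_OD_refl: "x \<in> OD D \<Longrightarrow> dvd_OD D x x"
  unfolding dvd_OD_def by (intro bexI[of _ 1]) auto

lemma dvd_OD_if_mult_unit:
  assumes "x = u * y" "unit_OD D u"
  shows "dvd_OD D x y"
proof -
  obtain v where "v \<in> OD D" "1 = u * v" using assms(2) unfolding unit_OD_def dvd_OD_def by blast
  then have "y = x * v" using assms(1) by (metis mult.assoc mult.commute mult_1_right)
  then show ?thesis unfolding dvd_OD_def using \<open>v \<in> OD D\<close> by blast
qed

context
  fixes D :: int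
  assumes D: "quad_disc D"
begin

lemma D_not_square: "D \<noteq> k^2"
  using D unfolding quad_disc_def by blast

lemma square_ne_D_times_square:
  fixes m n :: int
  assumes "m \<noteq> 0"
  shows "n^2 \<noteq> D * m^2"
proof
  assume "n^2 = D * m^2"
  then have "is_nth_power 2 (D * m^2)" by (metis is_nth_power_nth_power)
  then have "is_nth_power 2 D" using is_nth_power_mult_cancel_right[of 2 "m^2" D] assms by simp
  then show False using D_not_square by (auto elim: is_nth_powerE)
qed

lemma qsigma_cases: "qsigma D = 0 \<or> qsigma D = 1"
  using D unfolding quad_disc_def qsigma_def by blast

lemma D_eq: "D = 4 * qd D + qsigma D"
  using D unfolding quad_disc_def qd_def qsigma_def by auto

lemma four_qnorm: "4 * qnorm D a b = (2 * a + qsigma D * b)^2 - D * b^2"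
  using four_times_norm_form[OF qsigma_cases, of a b "qd D"] unfolding D_eq[symmetric] qnorm_def .

lemma qnorm_mult:
  "qnorm D (a*c + qd D*b*e) (a*e + b*c + qsigma D*b*e) = qnorm D a b * qnorm D c e"
  using qsigma_cases unfolding qnorm_def by (elim disjE) (simp_all add: algebra_simps power2_eq_square)

lemma qtau_square: "qtau D * qtau D = of_int (qsigma D) * qtau D + of_int (qd D)"
proof -
  let ?s = "csqrt (of_int D)" and ?g = "of_int (qsigma D) :: complex"
  have s2: "?s * ?s = of_int D" using power2_csqrt[of "of_int D"] by (simp add: power2_eq_square)
  have g2: "?g * ?g = ?g" using qsigma_cases by auto
  have Dc: "(of_int D :: complex) = 4 * of_int (qd D) + ?g"
    using D_eq by (metis of_int_add of_int_mult of_int_numeral)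
  have "qtau D * qtau D = (?g * ?g + 2 * ?g * ?s + ?s * ?s) / 4"
    unfolding qtau_def by (simp add: field_simps)
  also have "\<dots> = (?g * ?g + ?g * ?s) / 2 + of_int (qd D)" using g2 s2 Dc by (simp add: field_simps)
  also have "\<dots> = ?g * qtau D + of_int (qd D)" unfolding qtau_def by (simp add: field_simps)
  finally show ?thesis .
qed

lemma qelem_mult:
  "qelem D a b * qelem D c e = qelem D (a*c + qd D*b*e) (a*e + b*c + qsigma D*b*e)"
proof -
  have "qelem D a b * qelem D c e = of_int a * of_int c
      + (of_int a * of_int e + of_int b * of_int c) * qtau D + of_int b * of_int e * (qtau D * qtau D)"
    unfolding qelem_def by (simp add: algebra_simps)
  also have "\<dots> = qelem D (a*c + qd D*b*e) (a*e + b*c + qsigma D*b*e)"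
    unfolding qtau_square qelem_def by (simp add: algebra_simps)
  finally show ?thesis .
qed

lemma qelem_eq_iff: "qelem D a b = qelem D c e \<longleftrightarrow> a = c \<and> b = e"
proof (cases "b = e")
  case True
  then show ?thesis by (simp add: qelem_def)
next
  case False
  let ?s = "csqrt (of_int D)"
  have "qelem D a b \<noteq> qelem D c e"
  proof
    assume "qelem D a b = qelem D c e"
    then have "of_int (e - b) * qtau D = (of_int (a - c) :: complex)"
      unfolding qelem_def by (simp add: algebra_simps)
    then have "of_int (e - b) * ?s = (of_int (2*(a-c) - (e-b)*qsigma D) :: complex)"
      unfolding qtau_def by (simp add: field_simps)
    then have "(of_int (e - b) * ?s)^2 = (of_int ((2*(a-c) - (e-b)*qsigma D)^2) :: complex)"
      by simp
    then have "(of_int ((e-b)^2 * D) :: complex) = of_int ((2*(a-c) - (e-b)*qsigma D)^2)"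
      by (simp add: power_mult_distrib)
    then have "(2*(a-c) - (e-b)*qsigma D)^2 = D * (e-b)^2"
      by (simp only: of_int_eq_iff) (simp add: mult.commute)
    then show False using square_ne_D_times_square False by simp
  qed
  then show ?thesis using False by blast
qed

lemma qelem_mult_conj: "qelem D a b * qelem D (a + qsigma D * b) (-b) = of_int (qnorm D a b)"
proof -
  have "qelem D a b * qelem D (a + qsigma D * b) (-b) = qelem D (qnorm D a b) 0"
    unfolding qelem_mult qnorm_def qelem_eq_iff by (simp add: algebra_simps power2_eq_square)
  then show ?thesis by (simp add: qelem_def)
qed

lemma OD_mult: "x \<in> OD D \<Longrightarrow> y \<in> OD D \<Longrightarrow> x * y \<in> OD D"
  unfolding mem_OD_iff using qelem_mult by metis

lemma prod_list_in_OD: "\<forall>x\<in>set xs. x \<in> OD D \<Longrightarrow> prod_list xs \<in> OD D"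
  by (induction xs) (auto intro: OD_mult)

lemma qelem_eq_0_iff: "qelem D a b = 0 \<longleftrightarrow> a = 0 \<and> b = 0"
  using qelem_eq_iff[of a b 0 0] by (simp add: qelem_def)

lemma qnorm_eq_mult_if_qelem_mult:
  assumes "qelem D a b * qelem D c e = qelem D x y"
  shows "qnorm D x y = qnorm D a b * qnorm D c e"
proof -
  have "x = a*c + qd D*b*e" "y = a*e + b*c + qsigma D*b*e"
    using assms unfolding qelem_mult qelem_eq_iff by simp_all
  then show ?thesis using qnorm_mult by simp
qed

lemma unit_OD_qelem_iff: "unit_OD D (qelem D a b) \<longleftrightarrow> \<bar>qnorm D a b\<bar> = 1"
proof
  assume "unit_OD D (qelem D a b)"
  then obtain f g where "qelem D a b * qelem D f g = qelem D 1 0"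
    unfolding unit_OD_def dvd_OD_qelem_iff by (auto simp: qelem_def)
  then have "qnorm D 1 0 = qnorm D a b * qnorm D f g" by (rule qnorm_eq_mult_if_qelem_mult)
  then have "qnorm D a b * qnorm D f g = 1" by (simp add: qnorm_def)
  then show "\<bar>qnorm D a b\<bar> = 1" using abs_zmult_eq_1[of "qnorm D a b" "qnorm D f g"] by simp
next
  assume h: "\<bar>qnorm D a b\<bar> = 1"
  let ?N = "qnorm D a b"
  have "qelem D a b * qelem D (?N * (a + qsigma D * b)) (?N * (-b))
      = of_int ?N * (qelem D a b * qelem D (a + qsigma D * b) (-b))"
    unfolding of_int_mult_qelem[symmetric] by (rule mult.left_commute)
  also have "\<dots> = of_int (?N * ?N)" by (simp only: qelem_mult_conj of_int_mult)
  also have "?N * ?N = 1" using h abs_mult_self_eq[of ?N] by simp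
  finally show "unit_OD D (qelem D a b)"
    unfolding unit_OD_def dvd_OD_qelem_iff by (metis qelem_in_OD of_int_1)
qed

lemma dvd_OD_of_int_qelem_iff:
  assumes "p \<noteq> 0"
  shows "dvd_OD D (of_int p) (qelem D a b) \<longleftrightarrow> p dvd a \<and> p dvd b"
proof
  assume "dvd_OD D (of_int p) (qelem D a b)"
  then obtain f g where "qelem D a b = of_int p * qelem D f g"
    unfolding of_int_eq_qelem[where D = D and n = p] dvd_OD_qelem_iff by metis
  then have "qelem D a b = qelem D (p*f) (p*g)" by (simp add: of_int_mult_qelem)
  then show "p dvd a \<and> p dvd b" unfolding qelem_eq_iff by simp
next
  assume "p dvd a \<and> p dvd b"
  then obtain f g where "a = p*f" "b = p*g" by (auto elim!: dvdE)
  then have "qelem D a b = of_int p * qelem D f g" by (simp add: of_int_mult_qelem)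
  then show "dvd_OD D (of_int p) (qelem D a b)" unfolding dvd_OD_def using qelem_in_OD by blast
qed

lemma dvd_OD_trans: "dvd_OD D x y \<Longrightarrow> dvd_OD D y z \<Longrightarrow> dvd_OD D x z"
  unfolding dvd_OD_def by (metis OD_mult mult.assoc)

lemma prime_not_dvd_snd_if_abs_qnorm_eq:
  fixes p :: int
  assumes p: "prime p" and N: "\<bar>qnorm D x y\<bar> = p"
  shows "\<not> p dvd y"
proof
  assume "p dvd y"
  then obtain y' where y': "y = p * y'" by (auto elim: dvdE)
  have pN: "p dvd qnorm D x y" using N by (metis dvd_abs_iff dvd_refl)
  have "x^2 = qnorm D x y - qsigma D * x * y + qd D * y^2" unfolding qnorm_def by simp
  then have "p dvd x^2" using pN y' by (simp add: power2_eq_square)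
  then have "p dvd x" using p prime_dvd_power by blast
  then obtain x' where x': "x = p * x'" by (auto elim: dvdE)
  have "qnorm D x y = p * p * qnorm D x' y'"
    unfolding qnorm_def x' y' by (simp add: algebra_simps power2_eq_square)
  then have "p * p dvd p * 1" using N by (metis dvd_abs_iff dvd_triv_left mult_1_right)
  then have "p dvd 1" using p by (metis dvd_mult_cancel_left not_prime_0)
  then show False using p not_prime_unit by blast
qed

lemma dvd_OD_qelem_iff_prime_qnorm:
  fixes p :: int
  assumes p: "prime p" and N: "\<bar>qnorm D x y\<bar> = p"
  shows "dvd_OD D (qelem D x y) (qelem D a b) \<longleftrightarrow> p dvd b*x - a*y"
proof -
  let ?N = "qnorm D x y"
  have pN: "p dvd ?N" using N by (metis dvd_abs_iff dvd_refl)
  show ?thesis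
  proof
    assume "dvd_OD D (qelem D x y) (qelem D a b)"
    then obtain f g where "qelem D x y * qelem D f g = qelem D a b"
      unfolding dvd_OD_qelem_iff by metis
    then have "a = x*f + qd D*y*g" "b = x*g + y*f + qsigma D*y*g"
      unfolding qelem_mult qelem_eq_iff by simp_all
    then have "b*x - a*y = g * ?N" unfolding qnorm_def by (simp add: algebra_simps power2_eq_square)
    then show "p dvd b*x - a*y" using pN by simp
  next
    \<comment> \<open>\<open>(a + b\<tau>)(x + \<sigma>y - y\<tau>) = F + S\<tau>\<close>, and \<open>N | F\<close> follows from \<open>N | S\<close> because \<open>p \<nmid> y\<close>\<close>
    assume pS: "p dvd b*x - a*y"
    let ?F = "a*x + a*qsigma D*y - qd D*b*y" and ?S = "b*x - a*y"
    have Nd: "?N dvd z" if "p dvd z" for z using that N by (metis abs_dvd_iff)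
    have "y * ?F = b * ?N - (x + qsigma D*y) * ?S"
      unfolding qnorm_def by (simp add: algebra_simps power2_eq_square)
    then have "p dvd y * ?F" using pN pS by simp
    then have "p dvd ?F"
      using prime_not_dvd_snd_if_abs_qnorm_eq[OF p N] p prime_dvd_multD by blast
    then obtain f g where f: "?F = ?N * f" and g: "?S = ?N * g" using Nd pS by (meson dvdE)
    have N0: "?N \<noteq> 0" using N p by auto
    have "?N * (x*f + qd D*y*g) = x*?F + qd D*y*?S" using f g by (simp add: algebra_simps)
    also have "\<dots> = ?N * a" unfolding qnorm_def by (simp add: algebra_simps power2_eq_square)
    moreover have "?N * (x*g + y*f + qsigma D*y*g) = x*?S + y*?F + qsigma D*y*?S"
      using f g by (simp add: algebra_simps)
    moreover have "\<dots> = ?N * b" unfolding qnorm_def by (simp add: algebra_simps power2_eq_square)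
    ultimately have "qelem D a b = qelem D x y * qelem D f g"
      unfolding qelem_mult using N0 by simp
    then show "dvd_OD D (qelem D x y) (qelem D a b)" unfolding dvd_OD_qelem_iff by blast
  qed
qed

lemma prime_OD_if_abs_qnorm_prime:
  fixes p :: int
  assumes p: "prime p" and N: "\<bar>qnorm D x y\<bar> = p"
  shows "prime_OD D (qelem D x y)"
proof -
  have p1: "p > 1" using p prime_gt_1_int by blast
  have pN: "p dvd qnorm D x y" using N by (metis dvd_abs_iff dvd_refl)
  have "qelem D x y \<noteq> 0" using N p1 by (auto simp: qelem_eq_0_iff qnorm_def)
  moreover have "\<not> unit_OD D (qelem D x y)" using N p1 by (simp add: unit_OD_qelem_iff)
  moreover have "dvd_OD D (qelem D x y) \<beta> \<or> dvd_OD D (qelem D x y) \<gamma>"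
    if \<beta>\<gamma>: "\<beta> \<in> OD D" "\<gamma> \<in> OD D" "dvd_OD D (qelem D x y) (\<beta> * \<gamma>)" for \<beta> \<gamma>
  proof -
    obtain a b c e where \<beta>: "\<beta> = qelem D a b" and \<gamma>: "\<gamma> = qelem D c e"
      using \<beta>\<gamma>(1,2) unfolding mem_OD_iff by blast
    let ?X = "a*c + qd D*b*e" and ?Y = "a*e + b*c + qsigma D*b*e"
    have "p dvd ?Y*x - ?X*y"
      using \<beta>\<gamma>(3) unfolding \<beta> \<gamma> qelem_mult dvd_OD_qelem_iff_prime_qnorm[OF p N] .
    then have "p dvd y * (?X*y - ?Y*x) + b*e*qnorm D x y"
      using pN by (metis dvd_add dvd_mult dvd_mult2 dvd_minus_iff minus_diff_eq)
    moreover have "(b*x - a*y) * (e*x - c*y) = y * (?X*y - ?Y*x) + b*e*qnorm D x y"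
      unfolding qnorm_def by (simp add: algebra_simps power2_eq_square)
    ultimately have "p dvd (b*x - a*y) * (e*x - c*y)" by simp
    then have "p dvd b*x - a*y \<or> p dvd e*x - c*y" using p prime_dvd_multD by blast
    then show ?thesis
      unfolding \<beta> \<gamma> dvd_OD_qelem_iff_prime_qnorm[OF p N] .
  qed
  ultimately show ?thesis unfolding prime_OD_def by simp
qed

lemma prime_dvd_qelem_if_dvd_qnorm:
  fixes p :: int
  assumes p: "prime p" and no_root: "\<And>r. \<not> p dvd qnorm D r 1"
    and pN: "p dvd qnorm D a b"
  shows "p dvd a \<and> p dvd b"
proof (cases "p dvd b")
  case True
  then obtain b' where b': "b = p * b'" by (auto elim: dvdE)
  have "a^2 = qnorm D a b - qsigma D * a * b + qd D * b^2" unfolding qnorm_def by simp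
  then have "p dvd a^2" using pN b' by (simp add: power2_eq_square)
  then show ?thesis using True p prime_dvd_power by blast
next
  case False
  then obtain u v where uv: "u*p + v*b = 1"
    using bezout_int[of p b] prime_imp_coprime[OF p False] by auto
  \<comment> \<open>with \<open>v \<equiv> b\<^sup>-\<^sup>1 (mod p)\<close>, \<open>b\<^sup>2 N(av + \<tau>) \<equiv> N(a + b\<tau>) (mod p)\<close>\<close>
  have "b^2 * qnorm D (a*v) 1 - qnorm D a b = (b*v - 1) * (a^2*(b*v + 1) + qsigma D*a*b)"
    unfolding qnorm_def by (simp add: algebra_simps power2_eq_square)
  also have "b*v - 1 = p * (-u)" using uv by (simp add: algebra_simps)
  finally have "p dvd b^2 * qnorm D (a*v) 1 - qnorm D a b" by simp
  then have "p dvd b^2 * qnorm D (a*v) 1" using pN by (metis diff_add_cancel dvd_add)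
  then have "p dvd b^2" using p no_root prime_dvd_multD by blast
  then show ?thesis using False p prime_dvd_power by blast
qed

lemma prime_OD_of_int_if_no_qnorm_root:
  fixes p :: int
  assumes p: "prime p" and no_root: "\<And>r. \<not> p dvd qnorm D r 1"
  shows "prime_OD D (of_int p)"
proof -
  have p1: "p > 1" using p prime_gt_1_int by blast
  then have p0: "p \<noteq> 0" by simp
  have "\<not> unit_OD D (qelem D p 0)"
    unfolding unit_OD_qelem_iff qnorm_def using less_1_mult[OF p1 p1] by (simp add: power2_eq_square)
  moreover have "dvd_OD D (of_int p) \<beta> \<or> dvd_OD D (of_int p) \<gamma>"
    if \<beta>\<gamma>: "\<beta> \<in> OD D" "\<gamma> \<in> OD D" "dvd_OD D (of_int p) (\<beta> * \<gamma>)" for \<beta> \<gamma>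
  proof -
    obtain a b c e where \<beta>: "\<beta> = qelem D a b" and \<gamma>: "\<gamma> = qelem D c e"
      using \<beta>\<gamma>(1,2) unfolding mem_OD_iff by blast
    let ?X = "a*c + qd D*b*e" and ?Y = "a*e + b*c + qsigma D*b*e" and ?N = "qnorm D a b"
    have X: "p dvd ?X" and Y: "p dvd ?Y"
      using \<beta>\<gamma>(3) unfolding \<beta> \<gamma> qelem_mult dvd_OD_of_int_qelem_iff[OF p0] by auto
    have "(a + qsigma D*b)*?X - qd D*b*?Y = c * ?N"
      unfolding qnorm_def by (simp add: algebra_simps power2_eq_square)
    then have cN: "p dvd c * ?N" using X Y by (metis dvd_diff dvd_mult)
    have "a*?Y - b*?X = e * ?N" unfolding qnorm_def by (simp add: algebra_simps power2_eq_square)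
    then have eN: "p dvd e * ?N" using X Y by (metis dvd_diff dvd_mult)
    show ?thesis
    proof (cases "p dvd ?N")
      case True
      then have "p dvd a" "p dvd b" using prime_dvd_qelem_if_dvd_qnorm[OF p no_root] by blast+
      then show ?thesis unfolding \<beta> dvd_OD_of_int_qelem_iff[OF p0] by blast
    next
      case False
      then have "p dvd c" "p dvd e" using cN eN p prime_dvd_multD by blast+
      then show ?thesis unfolding \<gamma> dvd_OD_of_int_qelem_iff[OF p0] by blast
    qed
  qed
  ultimately show ?thesis
    unfolding prime_OD_def of_int_eq_qelem[where D = D and n = p] using p0 by (simp add: qelem_eq_0_iff)
qed

lemma split_factor_if_mult_prod_prime_OD:
  assumes "\<forall>\<pi>\<in>set \<pi>s. prime_OD D \<pi>" "c \<in> OD D" "\<beta> \<in> OD D" "\<gamma> \<in> OD D"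
    and "c * prod_list \<pi>s = \<beta> * \<gamma>"
  shows "\<exists>\<beta>' \<gamma>'. \<beta>' \<in> OD D \<and> \<gamma>' \<in> OD D \<and> c = \<beta>' * \<gamma>' \<and> dvd_OD D \<beta>' \<beta> \<and> dvd_OD D \<gamma>' \<gamma>"
  using assms
proof (induction \<pi>s arbitrary: \<beta> \<gamma>)
  case Nil
  then show ?case using dvd_OD_refl by auto
next
  case (Cons \<pi> \<pi>s)
  have \<pi>: "prime_OD D \<pi>" and primes: "\<forall>\<pi>\<in>set \<pi>s. prime_OD D \<pi>" using Cons.prems(1) by simp_all
  then have \<pi>OD: "\<pi> \<in> OD D" and \<pi>0: "\<pi> \<noteq> 0" unfolding prime_OD_def by simp_all
  have "c * prod_list \<pi>s \<in> OD D"
    using primes Cons.prems(2) prod_list_in_OD OD_mult unfolding prime_OD_def by blast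
  moreover have eq: "\<beta> * \<gamma> = \<pi> * (c * prod_list \<pi>s)" using Cons.prems(5) by (simp add: algebra_simps)
  ultimately have "dvd_OD D \<pi> (\<beta> * \<gamma>)" unfolding dvd_OD_def by blast
  then have "dvd_OD D \<pi> \<beta> \<or> dvd_OD D \<pi> \<gamma>" using \<pi> Cons.prems(3,4) unfolding prime_OD_def by blast
  then show ?case
  proof
    assume "dvd_OD D \<pi> \<beta>"
    then obtain \<beta>1 where \<beta>1: "\<beta>1 \<in> OD D" "\<beta> = \<pi> * \<beta>1" unfolding dvd_OD_def by blast
    then have "c * prod_list \<pi>s = \<beta>1 * \<gamma>" using eq \<pi>0 by (simp add: mult.assoc)
    then obtain \<beta>' \<gamma>' where "\<beta>' \<in> OD D" "\<gamma>' \<in> OD D" "c = \<beta>' * \<gamma>'" "dvd_OD D \<beta>' \<beta>1" "dvd_OD D \<gamma>' \<gamma>"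
      using Cons.IH[OF primes Cons.prems(2) \<beta>1(1) Cons.prems(4)] by blast
    moreover have "dvd_OD D \<beta>1 \<beta>" unfolding dvd_OD_def using \<beta>1 \<pi>OD by (auto simp: mult.commute)
    ultimately show ?case using dvd_OD_trans by blast
  next
    assume "dvd_OD D \<pi> \<gamma>"
    then obtain \<gamma>1 where \<gamma>1: "\<gamma>1 \<in> OD D" "\<gamma> = \<pi> * \<gamma>1" unfolding dvd_OD_def by blast
    then have "c * prod_list \<pi>s = \<beta> * \<gamma>1" using eq \<pi>0 by (simp add: mult.left_commute)
    then obtain \<beta>' \<gamma>' where "\<beta>' \<in> OD D" "\<gamma>' \<in> OD D" "c = \<beta>' * \<gamma>'" "dvd_OD D \<beta>' \<beta>" "dvd_OD D \<gamma>' \<gamma>1"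
      using Cons.IH[OF primes Cons.prems(2) Cons.prems(3) \<gamma>1(1)] by blast
    moreover have "dvd_OD D \<gamma>1 \<gamma>" unfolding dvd_OD_def using \<gamma>1 \<pi>OD by (auto simp: mult.commute)
    ultimately show ?case using dvd_OD_trans by blast
  qed
qed

lemma irreducible_OD_dvd_if_mult_eq:
  assumes "irreducible_OD D c" "has_prime_factorization_OD D z" "\<beta> \<in> OD D" "\<gamma> \<in> OD D"
    and "c * z = \<beta> * \<gamma>"
  shows "dvd_OD D c \<beta> \<or> dvd_OD D c \<gamma>"
proof -
  obtain \<pi>s where "\<forall>\<pi>\<in>set \<pi>s. prime_OD D \<pi>" "z = prod_list \<pi>s"
    using assms(2) unfolding has_prime_factorization_OD_def by blast
  then obtain \<beta>' \<gamma>' where split: "\<beta>' \<in> OD D" "\<gamma>' \<in> OD D" "c = \<beta>' * \<gamma>'"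
      "dvd_OD D \<beta>' \<beta>" "dvd_OD D \<gamma>' \<gamma>"
    using split_factor_if_mult_prod_prime_OD assms(1,3-5) unfolding irreducible_OD_def by metis
  then have "unit_OD D \<beta>' \<or> unit_OD D \<gamma>'" using assms(1) unfolding irreducible_OD_def by blast
  then show ?thesis
    using split dvd_OD_if_mult_unit dvd_OD_trans by (metis mult.commute)
qed

lemma exists_small_qnorm_multiple:
  fixes p r :: int
  assumes p: "p > 1" and r: "p dvd qnorm D r 1"
    and bound: "(D < 0 \<and> -D < 3 * p^2) \<or> (D > 0 \<and> D < 5 * p^2)"
  shows "\<exists>a m. qnorm D a 1 = p * m \<and> m \<noteq> 0 \<and> \<bar>m\<bar> < p"
proof -
  obtain j where j: "\<bar>(2*r + qsigma D + j * (2*p))^2 - D\<bar> < 4 * p^2"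
    using exists_residue_near_square[OF _ bound] p by fastforce
  define a where "a = r + j * p"
  have four: "4 * qnorm D a 1 = (2*r + qsigma D + j * (2*p))^2 - D"
    unfolding four_qnorm a_def by (simp add: algebra_simps)
  have "p dvd qnorm D a 1" unfolding a_def qnorm_shift using r by simp
  then obtain m where m: "qnorm D a 1 = p * m" by (auto elim: dvdE)
  have "(2*r + qsigma D + j * (2*p))^2 \<noteq> D * 1^2"
    using square_ne_D_times_square[of 1] by simp
  then have "m \<noteq> 0" using four m by auto
  moreover have "\<bar>m\<bar> < p"
  proof -
    have "\<bar>4 * (p * m)\<bar> < 4 * p^2" using j four m by simp
    then have "4 * p * \<bar>m\<bar> < 4 * p * p" using p by (simp add: abs_mult power2_eq_square)
    then show ?thesis using p by simp
  qed
  ultimately show ?thesis using m by blast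
qed

lemma has_prime_factorization_OD_if_not_irreducible:
  fixes p :: int
  assumes p: "prime p" and red: "\<not> irreducible_OD D (of_int p)"
  shows "has_prime_factorization_OD D (of_int p)"
proof -
  have p1: "p > 1" using p prime_gt_1_int by blast
  have "\<not> unit_OD D (qelem D p 0)"
    unfolding unit_OD_qelem_iff qnorm_def using less_1_mult[OF p1 p1] by (simp add: power2_eq_square)
  then obtain \<alpha> \<beta> where "\<alpha> \<in> OD D" "\<beta> \<in> OD D" and p_eq: "of_int p = \<alpha> * \<beta>"
      and nonunit: "\<not> unit_OD D \<alpha>" "\<not> unit_OD D \<beta>"
    using red p1 unfolding irreducible_OD_def of_int_eq_qelem[where D = D and n = p] by (auto simp: qelem_eq_0_iff)
  then obtain a b c e where \<alpha>: "\<alpha> = qelem D a b" and \<beta>: "\<beta> = qelem D c e"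
    unfolding mem_OD_iff by blast
  have "qnorm D a b * qnorm D c e = p^2"
    using qnorm_eq_mult_if_qelem_mult[of a b c e p 0] p_eq unfolding \<alpha> \<beta> of_int_eq_qelem[where D = D and n = p]
    by (simp add: qnorm_def)
  moreover have "\<bar>qnorm D a b\<bar> \<noteq> 1" "\<bar>qnorm D c e\<bar> \<noteq> 1"
    using nonunit unfolding \<alpha> \<beta> unit_OD_qelem_iff by simp_all
  ultimately have "\<bar>qnorm D a b\<bar> = p" "\<bar>qnorm D c e\<bar> = p"
    using abs_eq_prime_if_mult_eq_prime_square[OF p] by (metis mult.commute)+
  then have "prime_OD D \<alpha>" "prime_OD D \<beta>"
    unfolding \<alpha> \<beta> using prime_OD_if_abs_qnorm_prime[OF p] by simp_all
  then show ?thesis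
    unfolding p_eq by (intro has_prime_factorization_OD_mult has_prime_factorization_OD_prime)
qed

lemma prime_OD_if_irreducible_large:
  fixes p :: nat
  assumes p: "prime p" and irr: "irreducible_OD D (of_nat p)"
    and bound: "(D < 0 \<and> -D < 3 * int p^2) \<or> (D > 0 \<and> D < 5 * int p^2)"
    and smaller: "\<And>q. q < p \<Longrightarrow> prime q \<Longrightarrow> has_prime_factorization_OD D (of_nat q)"
  shows "prime_OD D (of_nat p)"
proof (rule ccontr)
  let ?P = "int p"
  have P: "prime ?P" "?P > 1" "?P \<noteq> 0" using p prime_gt_1_nat by auto
  assume "\<not> prime_OD D (of_nat p)"
  then obtain r where "?P dvd qnorm D r 1"
    using prime_OD_of_int_if_no_qnorm_root[OF P(1)] by auto
  then obtain a m where am: "qnorm D a 1 = ?P * m" "m \<noteq> 0" "\<bar>m\<bar> < ?P"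
    using exists_small_qnorm_multiple[OF P(2) _ bound] by blast
  have "has_prime_factorization_OD D (of_nat (nat \<bar>m\<bar>))"
  proof (rule has_prime_factorization_OD_of_nat)
    fix q assume q: "prime q" "q dvd nat \<bar>m\<bar>"
    have "q \<le> nat \<bar>m\<bar>" using q(2) am(2) by (intro dvd_imp_le) simp_all
    moreover have "nat \<bar>m\<bar> < p" using am(3) by (simp add: nat_less_iff)
    ultimately have "q < p" by linarith
    with q show "has_prime_factorization_OD D (of_nat q)" using smaller by blast
  qed (use am(2) in simp)
  then have fac: "has_prime_factorization_OD D (of_int \<bar>m\<bar>)" by simp
  have "of_nat p * of_int \<bar>m\<bar> = of_int (sgn m) * (of_int (qnorm D a 1) :: complex)"
    using am(1) by (simp add: abs_sgn ac_simps)
  also have "\<dots> = qelem D (sgn m * a) (sgn m) * qelem D (a + qsigma D) (-1)"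
    using qelem_mult_conj[of a 1] of_int_mult_qelem[where k = "sgn m" and a = a and b = 1] by (simp, metis mult.assoc)
  finally have "dvd_OD D (of_nat p) (qelem D (sgn m * a) (sgn m))
      \<or> dvd_OD D (of_nat p) (qelem D (a + qsigma D) (-1))"
    using irreducible_OD_dvd_if_mult_eq[OF irr fac] by simp
  then have "?P dvd sgn m \<or> ?P dvd -1"
    by (metis dvd_OD_of_int_qelem_iff[OF P(3)] of_int_of_nat_eq)
  moreover have "sgn m = 1 \<or> sgn m = -1" using am(2) by (simp add: sgn_if)
  ultimately have "?P dvd 1" by (metis dvd_minus_iff)
  then show False using P(2) by simp
qed

end

theorem mainTheorem3:
  fixes D :: int
  assumes "quad_disc D"
    and "\<And>p::nat. prime p \<Longrightarrow>
           ((D < 0 \<and> real p \<le> sqrt (\<bar>real_of_int D\<bar> / 3)) \<or>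
            (D > 0 \<and> real p \<le> sqrt (real_of_int D / 5))) \<Longrightarrow>
           irreducible_OD D (of_nat p) \<Longrightarrow> prime_OD D (of_nat p)"
  shows "\<forall>p::nat. prime p \<longrightarrow>
           (\<exists>xs. (\<forall>x\<in>set xs. prime_OD D x) \<and> of_nat p = prod_list xs)"
proof (intro allI impI)
  have D0: "D \<noteq> 0" using D_not_square[OF assms(1), of 0] by simp
  fix p :: nat
  assume "prime p"
  then have "has_prime_factorization_OD D (of_nat p)"
  proof (induction p rule: less_induct)
    case (less p)
    show ?case
    proof (cases "irreducible_OD D (of_nat p)")
      case False
      then show ?thesis
        using has_prime_factorization_OD_if_not_irreducible[OF assms(1), of "int p"] less.prems by simp
    next
      case irr: True
      have "prime_OD D (of_nat p)"
        using assms(2)[OF less.prems _ irr] prime_bound_if_not_small[OF D0]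
          prime_OD_if_irreducible_large[OF assms(1) less.prems irr _ less.IH] by blast
      then show ?thesis by (rule has_prime_factorization_OD_prime)
    qed
  qed
  then show "\<exists>xs. (\<forall>x\<in>set xs. prime_OD D x) \<and> of_nat p = prod_list xs"
    unfolding has_prime_factorization_OD_def .
qed

end
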